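(* Consider the caching network and the cache-eavesdropper scenario $S_2$ described in the context, with a placement $\mathbf{m}=(m_1,\dots,m_N)$ of nonnegative integers filling the caches, i.e., $\sum_{j=1}^N m_j = nM$. If the network is secure in scenario $S_2$, then $M < N/S$.
   Context: A macro base station has access to a library of $N$ files $F_1,\dots,F_N$. There are $N_{\text{SBS}}$ small-cell base stations (SBSs), each with a cache of size $M$ files. Each file is split into $n$ fragments and encoded with a code such that any $n$ distinct encoded packets of a file suffice to recover it, while fewer than $n$ distinct packets do not allow recovery. A placement $\mathbf{m}$ means each SBS stores $m_j$ encoded packets of $F_j$, with packets stored at different SBSs all distinct. Each location is served by some number $d\in\{1,\dots,S\}$ of SBSs, where $S$ is the maximum number of SBSs serving a user and is attained at some location. Scenario $S_2$: an eavesdropper at a location served by $d$ SBSs has access to the cache contents of those $d$ SBSs, hence to $d m_j$ distinct packets of each file $F_j$. The network is secure in scenario $S_2$ if for every location of the eavesdropper it cannot recover any file. *)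

theory Defs
  imports "HOL-Analysis.Analysis"
begin

text \<open>A file split into n fragments (MDS-type code) can be recovered from k distinct
  encoded packets iff k \<ge> n.\<close>
definition can_recover :: "nat \<Rightarrow> nat \<Rightarrow> bool" where
  "can_recover n k \<longleftrightarrow> n \<le> k"

text \<open>Scenario S2: an eavesdropper at a location served by d SBSs sees d * m j distinct
  packets of file j. Locations are elements of a type 'loc, and srv l is the number of SBSs
  serving location l.\<close>
definition secure_S2 :: "nat \<Rightarrow> nat \<Rightarrow> ('loc \<Rightarrow> nat) \<Rightarrow> (nat \<Rightarrow> nat) \<Rightarrow> bool" where
  "secure_S2 N n srv m \<longleftrightarrow> (\<forall>l. \<forall>j\<in>{1..N}. \<not> can_recover n (srv l * m j))"

end

theory Submission
  imports Defs
begin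

text \<open>At a location served by all S SBSs the eavesdropper sees S m_j packets of each file,
  so security forces S m_j \<le> n - 1 for every j. Summing over the N files gives
  S n M = S \<Sigma> m_j \<le> N (n - 1) < N n, and cancelling n yields S M < N.\<close>

lemma secure_S2_imp_strict_bound:
  assumes "secure_S2 N n srv m" and "j \<in> {1..N}"
  shows "srv l * m j < n"
  using assms unfolding secure_S2_def can_recover_def by (simp add: not_le)

lemma sum_strict_bound_imp:
  fixes m :: "nat \<Rightarrow> nat"
  assumes "\<And>j. j \<in> A \<Longrightarrow> c * m j < n" and "finite A"
  shows "c * sum m A + card A \<le> card A * n"
proof -
  have "(\<Sum>j\<in>A. c * m j + 1) \<le> (\<Sum>j\<in>A. n)"
    by (rule sum_mono) (use assms(1) in force)
  moreover have "(\<Sum>j\<in>A. c * m j + 1) = c * sum m A + card A"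
    by (simp only: sum.distrib sum_distrib_left) simp
  ultimately show ?thesis by simp
qed

theorem corollary3:
  fixes N M n S :: nat and srv :: "'loc \<Rightarrow> nat" and m :: "nat \<Rightarrow> nat"
  assumes "N \<ge> 1" and "n \<ge> 1" and "S \<ge> 1"
    and "\<forall>l. srv l \<in> {1..S}"
    and "\<exists>l. srv l = S"
    and "(\<Sum>j=1..N. m j) = n * M"
    and "secure_S2 N n srv m"
  shows "real M < real N / real S"
proof -
  obtain l where "srv l = S" using assms(5) by blast
  hence "S * m j < n" if "j \<in> {1..N}" for j
    using secure_S2_imp_strict_bound[OF assms(7) that] by blast
  hence "S * sum m {1..N} + card {1..N} \<le> card {1..N} * n"
    by (intro sum_strict_bound_imp) auto
  hence "n * (S * M) + N \<le> n * N" using assms(6) by (simp add: algebra_simps)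
  hence "n * (S * M) < n * N" using assms(1) by linarith
  hence "S * M < N" by simp
  hence "real S * real M < real N" by (metis of_nat_less_iff of_nat_mult)
  thus ?thesis using assms(3) by (simp add: field_simps)
qed

end
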